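(* With the notation of the context, let $\lambda>0$ and define $\mathcal{G}_\lambda(x):=\{g(y): y\in\mathcal{C}_\lambda(x)\}$ and $\mathcal{G}(x):=\{g(y): y\in\mathcal{C}(x)\}$. For every $x$ such that $\hat y(x)\in\mathcal{C}(x)$, we have $\mathcal{G}_\lambda(x)\subseteq\mathcal{G}(x)$.
   Context: Classification with $C$ classes, labels in $[C]=\{1,\dots,C\}$. A classifier outputs a softmax vector $\hat\pi(x)\in\mathbb{R}^C$ and predicted class $\hat y(x)=\arg\max_i \hat\pi_i(x)$. A map $g:[C]\to[G]$ partitions the classes into $G$ groups. Define $d(y,y'):=\mathbb{I}\{g(y)\neq g(y')\}$. Given any real-valued score function $s(x,y)$ and $\lambda>0$, define the penalized score $s_\lambda(x,y):=s(x,y)+\lambda\, d(y,\hat y(x))$. Given a calibration set $\{(x_i,y_i)\}_{i=1}^n$ and $\alpha\in(0,1)$ with $\lceil (n+1)(1-\alpha)\rceil\le n$, $\hat q$ (resp. $\hat q_\lambda$) is the $\lceil (n+1)(1-\alpha)\rceil$-th smallest value of $\{s(x_i,y_i)\}_{i=1}^n$ (resp. $\{s_\lambda(x_i,y_i)\}_{i=1}^n$). Prediction sets: $\mathcal{C}(x)=\{y: s(x,y)\le\hat q\}$, $\mathcal{C}_\lambda(x)=\{y: s_\lambda(x,y)\le\hat q_\lambda\}$. *)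

theory Defs
  imports Complex_Main
begin

definition kth_smallest :: "nat \<Rightarrow> real list \<Rightarrow> real" where
  "kth_smallest k L = sort L ! (k - 1)"

definition grp_dist :: "(nat \<Rightarrow> nat) \<Rightarrow> nat \<Rightarrow> nat \<Rightarrow> real" where
  "grp_dist g y y' = (if g y \<noteq> g y' then 1 else 0)"

definition pen_score ::
  "('x \<Rightarrow> nat \<Rightarrow> real) \<Rightarrow> (nat \<Rightarrow> nat) \<Rightarrow> ('x \<Rightarrow> nat) \<Rightarrow> real \<Rightarrow> 'x \<Rightarrow> nat \<Rightarrow> real" where
  "pen_score s g yhat lam x y = s x y + lam * grp_dist g y (yhat x)"

definition conf_quantile ::
  "('x \<Rightarrow> nat \<Rightarrow> real) \<Rightarrow> nat \<Rightarrow> (nat \<Rightarrow> 'x) \<Rightarrow> (nat \<Rightarrow> nat) \<Rightarrow> real \<Rightarrow> real" where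
  "conf_quantile s n xs ys alpha =
     kth_smallest (nat \<lceil>real (n + 1) * (1 - alpha)\<rceil>) (map (\<lambda>i. s (xs i) (ys i)) [1..<n+1])"

definition pred_set :: "nat \<Rightarrow> ('x \<Rightarrow> nat \<Rightarrow> real) \<Rightarrow> real \<Rightarrow> 'x \<Rightarrow> nat set" where
  "pred_set C s q x = {y \<in> {1..C}. s x y \<le> q}"

end

theory Submission
  imports Defs "HOL-Library.Multiset"
begin

(* The penalty raises every calibration score by at most \<lambda>, and order statistics
   are monotone and commute with adding a constant, so q\<^sub>\<lambda> \<le> q + \<lambda>.  A label whose
   group differs from that of yhat x pays the full penalty \<lambda>, hence it lies in
   C\<^sub>\<lambda>(x) only if s(x,y) \<le> q\<^sub>\<lambda> - \<lambda> \<le> q, i.e. it already lies in C(x).  The remaining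
   labels of C\<^sub>\<lambda>(x) share the group of yhat x, which is in G(x) because yhat x \<in> C(x). *)

lemma length_filter_sort:
  "length (filter P (sort_key f xs)) = length (filter P xs)"
  by (simp add: filter_sort)

lemma sort_nth_le_iff_count:
  fixes L :: "'a::linorder list"
  assumes "k < length L"
  shows "sort L ! k \<le> t \<longleftrightarrow> k < length (filter (\<lambda>v. v \<le> t) L)"
proof -
  let ?S = "sort L"
  let ?I = "{i. i < length ?S \<and> ?S ! i \<le> t}"
  have count: "length (filter (\<lambda>v. v \<le> t) L) = card ?I"
    using length_filter_sort[of "\<lambda>v. v \<le> t" "\<lambda>x. x" L]
    by (simp add: length_filter_conv_card)
  show ?thesis
  proof
    assume "?S ! k \<le> t"
    have "{..k} \<subseteq> ?I"
    proof clarify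
      fix i
      assume "i \<le> k"
      then have "?S ! i \<le> ?S ! k"
        using sorted_nth_mono[OF sorted_sort, of i k L] assms by simp
      with \<open>?S ! k \<le> t\<close> \<open>i \<le> k\<close> assms show "i < length ?S \<and> ?S ! i \<le> t"
        by simp
    qed
    then have "k + 1 \<le> card ?I"
      using card_mono[of ?I "{..k}"] by simp
    then show "k < length (filter (\<lambda>v. v \<le> t) L)"
      using count by simp
  next
    assume "k < length (filter (\<lambda>v. v \<le> t) L)"
    show "?S ! k \<le> t"
    proof (rule ccontr)
      assume "\<not> ?S ! k \<le> t"
      have "?I \<subseteq> {..<k}"
      proof clarify
        fix i
        assume "i < length ?S" and "?S ! i \<le> t"
        show "i < k"
        proof (rule ccontr)
          assume "\<not> i < k"
          then have "?S ! k \<le> ?S ! i"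
            using sorted_nth_mono[OF sorted_sort, of k i L] \<open>i < length ?S\<close> by simp
          with \<open>\<not> ?S ! k \<le> t\<close> \<open>?S ! i \<le> t\<close> show False
            by simp
        qed
      qed
      then have "card ?I \<le> k"
        using card_mono[OF finite_lessThan] by simp
      with \<open>k < length (filter (\<lambda>v. v \<le> t) L)\<close> show False
        using count by simp
    qed
  qed
qed

lemma length_filter_le_mono:
  fixes L M :: "'a::preorder list"
  assumes "list_all2 (\<le>) L M"
  shows "length (filter (\<lambda>v. v \<le> t) M) \<le> length (filter (\<lambda>v. v \<le> t) L)"
  using assms by (induction rule: list_all2_induct) (auto dest: order_trans)

lemma sort_nth_mono:
  fixes L M :: "'a::linorder list"
  assumes "list_all2 (\<le>) L M" and "k < length M"
  shows "sort L ! k \<le> sort M ! k"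
proof -
  let ?t = "sort M ! k"
  have "k < length (filter (\<lambda>v. v \<le> ?t) M)"
    using sort_nth_le_iff_count[OF assms(2), of ?t] by simp
  also have "\<dots> \<le> length (filter (\<lambda>v. v \<le> ?t) L)"
    using length_filter_le_mono[OF assms(1)] .
  finally have "k < length (filter (\<lambda>v. v \<le> ?t) L)" .
  moreover have "k < length L"
    using assms list_all2_lengthD by metis
  ultimately show ?thesis
    using sort_nth_le_iff_count by blast
qed

lemma sort_map_mono:
  fixes f :: "'a::linorder \<Rightarrow> 'b::linorder"
  assumes "mono f"
  shows "sort (map f L) = map f (sort L)"
  using assms by (intro properties_for_sort sorted_map_mono) (auto simp: mono_def mono_on_def)

lemma kth_smallest_mono:
  assumes "list_all2 (\<le>) L M" and "k - 1 < length M"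
  shows "kth_smallest k L \<le> kth_smallest k M"
  unfolding kth_smallest_def using sort_nth_mono assms by blast

lemma kth_smallest_add_const:
  assumes "k - 1 < length L"
  shows "kth_smallest k (map (\<lambda>v. v + c) L) = kth_smallest k L + c"
proof -
  have "mono (\<lambda>v::real. v + c)"
    by (rule monoI) simp
  then show ?thesis
    unfolding kth_smallest_def using assms by (simp add: sort_map_mono)
qed

lemma conf_rank_index_valid:
  assumes "alpha < 1" and "nat \<lceil>real (n + 1) * (1 - alpha)\<rceil> \<le> n"
  shows "nat \<lceil>real (n + 1) * (1 - alpha)\<rceil> - 1 < n"
proof -
  have "0 < real (n + 1) * (1 - alpha)"
    using assms(1) by simp
  then have "0 < nat \<lceil>real (n + 1) * (1 - alpha)\<rceil>"
    by linarith
  with assms(2) show ?thesis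
    by linarith
qed

lemma conf_quantile_mono:
  assumes "\<And>x y. s x y \<le> s' x y"
    and "nat \<lceil>real (n + 1) * (1 - alpha)\<rceil> - 1 < n"
  shows "conf_quantile s n xs ys alpha \<le> conf_quantile s' n xs ys alpha"
  unfolding conf_quantile_def
  using assms by (intro kth_smallest_mono) (auto simp: list_all2_conv_all_nth simp del: upt_Suc)

lemma conf_quantile_add_const:
  assumes "nat \<lceil>real (n + 1) * (1 - alpha)\<rceil> - 1 < n"
  shows "conf_quantile (\<lambda>x y. s x y + c) n xs ys alpha = conf_quantile s n xs ys alpha + c"
  unfolding conf_quantile_def
  using kth_smallest_add_const[of _ "map (\<lambda>i. s (xs i) (ys i)) [1..<n+1]" c] assms
  by (simp add: comp_def)

lemma pen_score_le:
  assumes "lam \<ge> 0"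
  shows "pen_score s g yhat lam x y \<le> s x y + lam"
  unfolding pen_score_def grp_dist_def using assms by simp

lemma conf_quantile_pen_score_le:
  assumes "alpha < 1" and "nat \<lceil>real (n + 1) * (1 - alpha)\<rceil> \<le> n" and "lam \<ge> 0"
  shows "conf_quantile (pen_score s g yhat lam) n xs ys alpha \<le> conf_quantile s n xs ys alpha + lam"
proof -
  have rank: "nat \<lceil>real (n + 1) * (1 - alpha)\<rceil> - 1 < n"
    using conf_rank_index_valid assms(1,2) .
  have "conf_quantile (pen_score s g yhat lam) n xs ys alpha
      \<le> conf_quantile (\<lambda>x y. s x y + lam) n xs ys alpha"
    by (rule conf_quantile_mono[OF pen_score_le[OF assms(3)] rank])
  also have "\<dots> = conf_quantile s n xs ys alpha + lam"
    using conf_quantile_add_const[OF rank] .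
  finally show ?thesis .
qed

lemma pred_set_pen_score_other_group:
  assumes "q' \<le> q + lam"
    and "y \<in> pred_set C (pen_score s g yhat lam) q' x" and "g y \<noteq> g (yhat x)"
  shows "y \<in> pred_set C s q x"
  using assms unfolding pred_set_def pen_score_def grp_dist_def by auto

theorem corollary1:
  fixes C G n :: nat and pi :: "'x \<Rightarrow> nat \<Rightarrow> real" and yhat :: "'x \<Rightarrow> nat"
    and g :: "nat \<Rightarrow> nat" and s :: "'x \<Rightarrow> nat \<Rightarrow> real"
    and xs :: "nat \<Rightarrow> 'x" and ys :: "nat \<Rightarrow> nat" and alpha lam :: real and x :: 'x
  assumes softmax: "\<And>x'. (\<forall>i\<in>{1..C}. pi x' i > 0) \<and> (\<Sum>i\<in>{1..C}. pi x' i) = 1"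
    and argmax: "\<And>x'. yhat x' \<in> {1..C} \<and> (\<forall>i\<in>{1..C}. pi x' i \<le> pi x' (yhat x'))"
    and g_map: "\<forall>y\<in>{1..C}. g y \<in> {1..G}"
    and labels: "\<forall>i\<in>{1..n}. ys i \<in> {1..C}"
    and alpha: "0 < alpha" "alpha < 1"
    and rank_ok: "nat \<lceil>real (n + 1) * (1 - alpha)\<rceil> \<le> n"
    and lam: "lam > 0"
    and yhat_in: "yhat x \<in> pred_set C s (conf_quantile s n xs ys alpha) x"
  shows "g ` pred_set C (pen_score s g yhat lam) (conf_quantile (pen_score s g yhat lam) n xs ys alpha) x
         \<subseteq> g ` pred_set C s (conf_quantile s n xs ys alpha) x"
proof
  fix z
  assume "z \<in> g ` pred_set C (pen_score s g yhat lam) (conf_quantile (pen_score s g yhat lam) n xs ys alpha) x"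
  then obtain y where z: "z = g y"
    and y: "y \<in> pred_set C (pen_score s g yhat lam) (conf_quantile (pen_score s g yhat lam) n xs ys alpha) x"
    by blast
  have q: "conf_quantile (pen_score s g yhat lam) n xs ys alpha \<le> conf_quantile s n xs ys alpha + lam"
    using conf_quantile_pen_score_le[OF alpha(2) rank_ok less_imp_le[OF lam]] .
  show "z \<in> g ` pred_set C s (conf_quantile s n xs ys alpha) x"
  proof (cases "g y = g (yhat x)")
    case True
    then show ?thesis using z yhat_in by blast
  next
    case False
    then show ?thesis using z pred_set_pen_score_other_group[OF q y] by blast
  qed
qed

end
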